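(* Let $a,b,d>0$, $c>c_-$, $\phi(x)=\frac{ax^3+bx^2+cx+d}{x^3}$ ($x>0$), and let $(p,q)$ be a 2-cycle of $\phi$ with $p<q$. \begin{description} \item[(a)] If $\phi$ has a unique equilibrium $\overline{t}$, then $p<\overline{t}<q$. \item[(b)] If $\phi$ has two equilibria $\overline{t}_1<\overline{t}_2$, then for $c=c_m$ one of the following holds: $$p<\overline{t}_1<q<\overline{t}_2,\quad\text{or}\quad p<\overline{t}_1,\ q>\overline{t}_2;$$ and for $c=c_M$ one has $p<\overline{t}_1$, $q>\overline{t}_2$. \item[(c)] If $\phi$ has three equilibria $\overline{t}_1<\overline{t}_2<\overline{t}_3$, then one of the following holds: $$p<\overline{t}_1<q<\overline{t}_2,\quad\text{or}\quad p<\overline{t}_1,\ q>\overline{t}_3.$$ \end{description}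
   Context: $c_-$ is the unique negative zero of $Q(x)=4ax^3-b^2x^2-18abd\,x+27a^2d^2+4db^3$. A 2-cycle is a pair $(p,q)$ of positive numbers with $p\neq q$, $\phi(p)=q$, $\phi(q)=p$; an equilibrium is $t>0$ with $\phi(t)=t$, equivalently a positive root of $P(t)=t^4-at^3-bt^2-ct-d$. Let $c^*=-\sqrt{3bd}$ and let $c_b$ be the unique negative root of $H(x)=108x^2+(108ab+27a^3)x-9a^2b^2-32b^3$. When $c_b<\frac{b^2-12d}{3a}$, as the parameter $c$ increases from $c_b$ (with $a,b,d$ fixed), $P$ first acquires a positive double root $t_m$ at a local minimum of $P$, and later a positive double root $t_M$ at a local maximum of $P$; $c_m$ and $c_M$ denote the corresponding values of $c$. Two equilibria occur only for $c=c_m$ or $c=c_M$. *)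

theory Defs
  imports Complex_Main
begin

definition phi :: "real \<Rightarrow> real \<Rightarrow> real \<Rightarrow> real \<Rightarrow> real \<Rightarrow> real" where
  "phi a b c d x = (a*x^3 + b*x^2 + c*x + d) / x^3"

definition Pq :: "real \<Rightarrow> real \<Rightarrow> real \<Rightarrow> real \<Rightarrow> real \<Rightarrow> real" where
  "Pq a b c d t = t^4 - a*t^3 - b*t^2 - c*t - d"

definition dPq :: "real \<Rightarrow> real \<Rightarrow> real \<Rightarrow> real \<Rightarrow> real" where
  "dPq a b c t = 4*t^3 - 3*a*t^2 - 2*b*t - c"

definition Qc :: "real \<Rightarrow> real \<Rightarrow> real \<Rightarrow> real \<Rightarrow> real" where
  "Qc a b d x = 4*a*x^3 - b^2*x^2 - 18*a*b*d*x + 27*a^2*d^2 + 4*d*b^3"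

definition c_minus :: "real \<Rightarrow> real \<Rightarrow> real \<Rightarrow> real" where
  "c_minus a b d = (THE x. x < 0 \<and> Qc a b d x = 0)"

definition Hc :: "real \<Rightarrow> real \<Rightarrow> real \<Rightarrow> real" where
  "Hc a b x = 108*x^2 + (108*a*b + 27*a^3)*x - 9*a^2*b^2 - 32*b^3"

definition c_b :: "real \<Rightarrow> real \<Rightarrow> real" where
  "c_b a b = (THE x. x < 0 \<and> Hc a b x = 0)"

definition dbl_root_min :: "real \<Rightarrow> real \<Rightarrow> real \<Rightarrow> real \<Rightarrow> real \<Rightarrow> bool" where
  "dbl_root_min a b c d t \<longleftrightarrow> t > 0 \<and> Pq a b c d t = 0 \<and> dPq a b c t = 0 \<and>
     (\<exists>e>0. \<forall>s. \<bar>s - t\<bar> < e \<longrightarrow> Pq a b c d t \<le> Pq a b c d s)"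

definition dbl_root_max :: "real \<Rightarrow> real \<Rightarrow> real \<Rightarrow> real \<Rightarrow> real \<Rightarrow> bool" where
  "dbl_root_max a b c d t \<longleftrightarrow> t > 0 \<and> Pq a b c d t = 0 \<and> dPq a b c t = 0 \<and>
     (\<exists>e>0. \<forall>s. \<bar>s - t\<bar> < e \<longrightarrow> Pq a b c d s \<le> Pq a b c d t)"

definition c_m :: "real \<Rightarrow> real \<Rightarrow> real \<Rightarrow> real" where
  "c_m a b d = (LEAST c. c > c_b a b \<and> (\<exists>t. dbl_root_min a b c d t))"

definition c_M :: "real \<Rightarrow> real \<Rightarrow> real \<Rightarrow> real" where
  "c_M a b d = (LEAST c. c > c_m a b d \<and> (\<exists>t. dbl_root_max a b c d t))"

definition equilibria :: "real \<Rightarrow> real \<Rightarrow> real \<Rightarrow> real \<Rightarrow> real set" where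
  "equilibria a b c d = {t. t > 0 \<and> phi a b c d t = t}"

definition two_cycle :: "real \<Rightarrow> real \<Rightarrow> real \<Rightarrow> real \<Rightarrow> real \<Rightarrow> real \<Rightarrow> bool" where
  "two_cycle a b c d p q \<longleftrightarrow> p > 0 \<and> q > 0 \<and> p \<noteq> q \<and> phi a b c d p = q \<and> phi a b c d q = p"

end

theory Submission
  imports Defs "HOL-Computational_Algebra.Polynomial"
begin

text \<open>
  Equilibria are the positive roots of P, and a 2-cycle p < q gives P p < 0 < P q. Eliminating
  b and c with the two cycle equations shows P < 0 on (0, p], so every equilibrium lies above p,
  and one lies in (p, q). With three roots the fourth root of P is negative (their product is
  -d), so P < 0 between the two largest roots and q cannot lie there. For c = c_M the double
  root is a local maximum of P at height 0; if q lay between the two equilibria, the intermediate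
  value theorem would produce a third root between that double root and q. That c_M is attained
  follows from writing P t = t (F t - c) with F t = t^3 - a t^2 - b t - d / t (root_param):
  double roots of P are the points (t, F t) at critical points t of F, and the hypothesis on c_b
  says that F is decreasing at the point where the critical values of F are smallest, which
  forces a local maximum to its left and a local minimum, of larger critical value than c_b, to
  its right.
\<close>

lemma isCont_Pq [continuous_intros]: "isCont (Pq a b c d) x"
  unfolding Pq_def[abs_def] by (intro continuous_intros)

lemma mem_equilibria_iff: "t \<in> equilibria a b c d \<longleftrightarrow> t > 0 \<and> Pq a b c d t = 0"
proof -
  have "t > 0 \<Longrightarrow> phi a b c d t = t \<longleftrightarrow> a*t^3 + b*t^2 + c*t + d = t * t^3"
    unfolding phi_def by (auto simp: field_simps)
  moreover have "a*t^3 + b*t^2 + c*t + d = t * t^3 \<longleftrightarrow> Pq a b c d t = 0"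
    unfolding Pq_def by (auto simp: algebra_simps power_def)
  ultimately show ?thesis unfolding equilibria_def by auto
qed

lemma two_cycle_equations:
  assumes "two_cycle a b c d p q"
  shows "a*p^3 + b*p^2 + c*p + d = q*p^3" "a*q^3 + b*q^2 + c*q + d = p*q^3"
  using assms unfolding two_cycle_def phi_def by (auto simp: field_simps)

lemma two_cycle_Pq_signs:
  assumes "two_cycle a b c d p q" "p < q"
  shows "Pq a b c d p < 0" "Pq a b c d q > 0"
proof -
  have pq: "p > 0" "q > 0" using assms(1) unfolding two_cycle_def by auto
  note cyc = two_cycle_equations[OF assms(1)]
  have "Pq a b c d p = p^3 * (p - q)"
    using cyc(1) unfolding Pq_def by (simp add: algebra_simps power_def)
  then show "Pq a b c d p < 0" using pq assms(2) by (simp add: mult_pos_neg)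
  have "Pq a b c d q = q^3 * (q - p)"
    using cyc(2) unfolding Pq_def by (simp add: algebra_simps power_def)
  then show "Pq a b c d q > 0" using pq assms(2) by simp
qed

lemma two_cycle_coefficients:
  assumes "two_cycle a b c d p q"
  shows "b*(p*q) = p^2*q^2 + d - a*p*q*(p+q)" "c*(p*q) = a*p^2*q^2 - d*(p+q)"
proof -
  have pq: "p > 0" "p \<noteq> q" using assms unfolding two_cycle_def by auto
  note cyc = two_cycle_equations[OF assms]
  have "(p - q) * (b*(p*q)) = (p - q) * (p^2*q^2 + d - a*p*q*(p+q))"
    using cyc by algebra
  then show hb: "b*(p*q) = p^2*q^2 + d - a*p*q*(p+q)" using pq by simp
  have "p * (c*(p*q)) = p * (a*p^2*q^2 - d*(p+q))"
    using hb cyc by algebra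
  then show "c*(p*q) = a*p^2*q^2 - d*(p+q)" using pq by simp
qed

lemma Pq_neg_below_two_cycle:
  assumes "two_cycle a b c d p q" "p < q" "a > 0" "d > 0" "0 < t" "t \<le> p"
  shows "Pq a b c d t < 0"
proof -
  have pq: "p > 0" "q > 0" using assms unfolding two_cycle_def by auto
  note coeff = two_cycle_coefficients[OF assms(1)]
  have "(p*q) * Pq a b c d t = p*q*t^4 - a*p*q*t^3 - t^2*(b*(p*q)) - t*(c*(p*q)) - p*q*d"
    unfolding Pq_def by (simp add: algebra_simps)
  also have "\<dots> = - (p*q*t^2*(p*q - t^2) + (p-t)*(q-t)*(d + a*p*q*t))"
    unfolding coeff by (simp add: algebra_simps power_def)
  finally have id: "(p*q) * Pq a b c d t = - (p*q*t^2*(p*q - t^2) + (p-t)*(q-t)*(d + a*p*q*t))" .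
  have "t^2 \<le> p^2" using assms by (simp add: power_mono)
  also have "p^2 < p*q" using pq assms(2) by (simp add: power2_eq_square)
  finally have "p*q*t^2*(p*q - t^2) > 0" using pq assms(5) by simp
  moreover have "(p-t)*(q-t)*(d + a*p*q*t) \<ge> 0"
    using assms pq by (intro mult_nonneg_nonneg) auto
  ultimately have "(p*q) * Pq a b c d t < 0" unfolding id by linarith
  then show ?thesis using pq by (simp add: mult_less_0_iff)
qed

lemma two_cycle_less_equilibrium:
  assumes "two_cycle a b c d p q" "p < q" "a > 0" "d > 0" "t \<in> equilibria a b c d"
  shows "p < t"
  using Pq_neg_below_two_cycle[OF assms(1-4)] assms(5) by (force simp: mem_equilibria_iff)

lemma two_cycle_equilibrium_between:
  assumes "two_cycle a b c d p q" "p < q"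
  obtains t where "p < t" "t < q" "t \<in> equilibria a b c d"
proof -
  note signs = two_cycle_Pq_signs[OF assms]
  obtain t where t: "p \<le> t" "t \<le> q" "Pq a b c d t = 0"
    using IVT[of "Pq a b c d" p 0 q] signs assms(2) by (auto intro: isCont_Pq)
  moreover have "p > 0" using assms(1) unfolding two_cycle_def by simp
  ultimately show ?thesis
    using signs by (intro that[of t]) (auto simp: mem_equilibria_iff le_less)
qed

subsection \<open>Sign of P between its roots\<close>

lemma quadratic_eq_0_if_three_roots:
  fixes A B C x y z :: real
  assumes "A*x^2 + B*x + C = 0" "A*y^2 + B*y + C = 0" "A*z^2 + B*z + C = 0"
    and "x \<noteq> y" "y \<noteq> z" "x \<noteq> z"
  shows "A = 0 \<and> B = 0 \<and> C = 0"
proof -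
  have "(x - y) * (A*(x+y) + B) = 0" using assms(1,2) by (simp add: algebra_simps power2_eq_square)
  then have xy: "A*(x+y) + B = 0" using assms by simp
  have "(y - z) * (A*(y+z) + B) = 0" using assms(2,3) by (simp add: algebra_simps power2_eq_square)
  then have yz: "A*(y+z) + B = 0" using assms by simp
  have "A * (x - z) = (A*(x+y) + B) - (A*(y+z) + B)" by (simp add: algebra_simps)
  then have "A * (x - z) = 0" using xy yz by simp
  then have "A = 0" using assms by simp
  then show ?thesis using xy assms(1) by simp
qed

lemma Pq_neg_between_largest_roots:
  assumes "Pq a b c d t1 = 0" "Pq a b c d t2 = 0" "Pq a b c d t3 = 0"
    and "0 < t1" "t1 < t2" "t2 < t3" "d > 0" "t2 < x" "x < t3"
  shows "Pq a b c d x < 0"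
proof -
  define r where "r = a - t1 - t2 - t3"
  define A where "A = -b - (t1*t2 + t1*t3 + t2*t3) - r*(t1 + t2 + t3)"
  define B where "B = -c + t1*t2*t3 + r*(t1*t2 + t1*t3 + t2*t3)"
  define C where "C = -d - r*(t1*t2*t3)"
  have rem: "Pq a b c d t - (t-t1)*(t-t2)*(t-t3)*(t-r) = A*t^2 + B*t + C" for t
    unfolding Pq_def A_def B_def C_def r_def by (simp add: algebra_simps power_def)
  have "A = 0 \<and> B = 0 \<and> C = 0"
    using quadratic_eq_0_if_three_roots[of A t1 B C t2 t3] rem[of t1] rem[of t2] rem[of t3] assms(1-6)
    by auto
  then have factor: "Pq a b c d x = (x-t1)*(x-t2)*(x-t3)*(x-r)" and "r*(t1*t2*t3) < 0"
    using rem[of x] assms(7) unfolding C_def by auto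
  moreover have "t1*t2*t3 > 0" using assms by simp
  ultimately have "r < 0"
    by (metis mult_pos_pos not_less_iff_gr_or_eq mult_zero_left order.asym)
  then have "((x-t1)*(x-t2)*(x-r)) * (x-t3) < 0"
    using assms by (intro mult_pos_neg) auto
  then show ?thesis unfolding factor by (simp add: ac_simps)
qed

lemma local_max_zero_crossing:
  fixes f :: "real \<Rightarrow> real"
  assumes cont: "\<And>x. isCont f x" and "f t = 0" "e > 0" "\<forall>s. \<bar>s - t\<bar> < e \<longrightarrow> f s \<le> f t"
    and "f u > 0" "u \<noteq> t"
  obtains w where "f w = 0" "t < w \<and> w < u \<or> u < w \<and> w < t"
proof -
  define h where "h = min (e/2) (\<bar>u - t\<bar>/2)"
  have h: "0 < h" "h < e" "h < \<bar>u - t\<bar>"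
    using assms(3,6) unfolding h_def by (auto simp: min_less_iff_disj)
  show ?thesis
  proof (cases "t < u")
    case True
    have s: "t < t + h" "t + h < u" "f (t + h) \<le> 0" using assms h True by auto
    obtain w where "t + h \<le> w" "w \<le> u" "f w = 0" using IVT[of f "t + h" 0 u] s assms(5) cont by auto
    then show ?thesis using that s assms(5) by (metis dual_order.strict_trans2 order_less_le)
  next
    case False
    have s: "u < t - h" "t - h < t" "f (t - h) \<le> 0" using assms h False by auto
    obtain w where "u \<le> w" "w \<le> t - h" "f w = 0" using IVT2[of f "t - h" 0 u] s assms(5) cont by auto
    then show ?thesis using that s assms(5) by (metis order_le_less_trans order_less_le)
  qed
qed

subsection \<open>Double roots as critical points\<close>

definition root_param :: "real \<Rightarrow> real \<Rightarrow> real \<Rightarrow> real \<Rightarrow> real" where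
  "root_param a b d t = t^3 - a*t^2 - b*t - d/t"

definition root_param_deriv_num :: "real \<Rightarrow> real \<Rightarrow> real \<Rightarrow> real \<Rightarrow> real" where
  "root_param_deriv_num a b d t = 3*t^4 - 2*a*t^3 - b*t^2 + d"

definition crit_param :: "real \<Rightarrow> real \<Rightarrow> real \<Rightarrow> real" where
  "crit_param a b t = 4*t^3 - 3*a*t^2 - 2*b*t"

lemma Pq_eq_root_param: "t > 0 \<Longrightarrow> Pq a b c d t = t * (root_param a b d t - c)"
  unfolding Pq_def root_param_def by (simp add: field_simps eval_nat_numeral)

lemma dPq_eq_crit_param: "dPq a b c t = crit_param a b t - c"
  unfolding dPq_def crit_param_def by simp

lemma root_param_eq_crit_param_iff:
  "t > 0 \<Longrightarrow> root_param a b d t = crit_param a b t \<longleftrightarrow> root_param_deriv_num a b d t = 0"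
proof -
  assume "t > 0"
  then have "t * (root_param a b d t - crit_param a b t) = - root_param_deriv_num a b d t"
    unfolding root_param_def crit_param_def root_param_deriv_num_def
    by (simp add: field_simps eval_nat_numeral)
  then show ?thesis using \<open>t > 0\<close> by auto
qed

lemma has_real_derivative_root_param:
  "t > 0 \<Longrightarrow> (root_param a b d has_real_derivative root_param_deriv_num a b d t / t^2) (at t)"
  unfolding root_param_def[abs_def] root_param_deriv_num_def
  by (rule derivative_eq_intros refl | simp)+ (simp add: field_simps eval_nat_numeral)

lemma continuous_on_root_param: "0 < l \<Longrightarrow> continuous_on {l..u} (root_param a b d)"
  unfolding root_param_def[abs_def] by (intro continuous_intros) auto

lemma root_param_at_right_0:
  assumes "d > 0"
  shows "filterlim (root_param a b d) at_bot (at_right 0)"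
proof -
  have "filterlim (\<lambda>t. d * inverse t) at_top (at_right 0)"
    using filterlim_tendsto_pos_mult_at_top[OF tendsto_const assms filterlim_inverse_at_top_right] .
  then have neg: "filterlim (\<lambda>t. - (d * inverse t)) at_bot (at_right 0)"
    by (simp add: filterlim_uminus_at_top)
  have "((\<lambda>t. t^3 - a*t^2 - b*t) \<longlongrightarrow> 0^3 - a*0^2 - b*0) (at_right 0)"
    by (intro tendsto_intros)
  then have "filterlim (\<lambda>t. (t^3 - a*t^2 - b*t) + - (d * inverse t)) at_bot (at_right 0)"
    using neg by (subst filterlim_tendsto_add_at_bot_iff)
  then show ?thesis unfolding root_param_def[abs_def] by (simp add: divide_inverse)
qed

lemma root_param_at_top: "filterlim (root_param a b d) at_top at_top"
proof -
  have "((\<lambda>t. - a - b * inverse t - d * inverse t ^ 3) \<longlongrightarrow> - a - b * 0 - d * 0 ^ 3) at_top"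
    by (intro tendsto_intros tendsto_inverse_0_at_top filterlim_ident)
  then have "filterlim (\<lambda>t. (- a - b * inverse t - d * inverse t ^ 3) + t) at_top at_top"
    by (intro filterlim_tendsto_add_at_top filterlim_ident) simp_all
  then have "filterlim (\<lambda>t. t^2 * ((- a - b * inverse t - d * inverse t ^ 3) + t)) at_top at_top"
    by (intro filterlim_at_top_mult_at_top filterlim_pow_at_top filterlim_ident) auto
  moreover have "\<forall>\<^sub>F t in at_top. t^2 * ((- a - b * inverse t - d * inverse t ^ 3) + t) = root_param a b d t"
    using eventually_gt_at_top[of 0]
    by eventually_elim (simp add: root_param_def field_simps eval_nat_numeral)
  ultimately show ?thesis by (rule filterlim_cong[THEN iffD1, OF refl refl, rotated])
qed

lemma double_root_param:
  assumes "t > 0" "Pq a b c d t = 0" "dPq a b c t = 0"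
  shows "c = crit_param a b t" "root_param_deriv_num a b d t = 0"
proof -
  show c: "c = crit_param a b t" using assms(3) by (simp add: dPq_eq_crit_param)
  have "c = root_param a b d t" using assms(1,2) by (simp add: Pq_eq_root_param)
  then show "root_param_deriv_num a b d t = 0"
    using root_param_eq_crit_param_iff[OF assms(1), where a=a and b=b and d=d] c by simp
qed

lemma finite_double_root_params:
  "finite {c. \<exists>t>0. Pq a b c d t = 0 \<and> dPq a b c t = 0}"
proof -
  have "{t. root_param_deriv_num a b d t = 0} = {t. poly [:d, 0, -b, -2*a, 3:] t = 0}"
    unfolding root_param_deriv_num_def by (auto simp: algebra_simps power_def)
  then have "finite {t. root_param_deriv_num a b d t = 0}"
    using poly_roots_finite[of "[:d, 0, -b, -2*a, 3:]"] by simp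
  moreover have "{c. \<exists>t>0. Pq a b c d t = 0 \<and> dPq a b c t = 0}
      \<subseteq> crit_param a b ` {t. root_param_deriv_num a b d t = 0}"
    using double_root_param by blast
  ultimately show ?thesis using finite_subset by blast
qed

lemma double_root_at_critical_point:
  assumes "t > 0" "root_param_deriv_num a b d t = 0"
  shows "Pq a b (root_param a b d t) d t = 0" "dPq a b (root_param a b d t) t = 0"
  using assms root_param_eq_crit_param_iff[OF assms(1), where a=a and b=b and d=d]
  by (simp_all add: Pq_eq_root_param dPq_eq_crit_param)

lemma dbl_root_max_if_local_max:
  assumes "t > 0" "e > 0" "e \<le> t"
    and max: "\<forall>y. \<bar>y - t\<bar> < e \<longrightarrow> root_param a b d y \<le> root_param a b d t"
  shows "dbl_root_max a b (root_param a b d t) d t"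
proof -
  have "root_param_deriv_num a b d t / t^2 = 0"
    using max by (intro DERIV_local_max[OF has_real_derivative_root_param[OF assms(1)] assms(2)])
      (simp add: abs_minus_commute)
  then have crit: "root_param_deriv_num a b d t = 0" using assms(1) by simp
  have "Pq a b (root_param a b d t) d s \<le> 0" if "\<bar>s - t\<bar> < e" for s
  proof -
    have "s > 0" using that assms(3) by linarith
    then show ?thesis
      using max that by (simp add: Pq_eq_root_param mult_nonneg_nonpos)
  qed
  then show ?thesis
    unfolding dbl_root_max_def using double_root_at_critical_point[OF assms(1) crit] assms(1,2)
    by auto
qed

lemma dbl_root_min_if_local_min:
  assumes "t > 0" "e > 0" "e \<le> t"
    and min: "\<forall>y. \<bar>y - t\<bar> < e \<longrightarrow> root_param a b d t \<le> root_param a b d y"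
  shows "dbl_root_min a b (root_param a b d t) d t"
proof -
  have "root_param_deriv_num a b d t / t^2 = 0"
    using min by (intro DERIV_local_min[OF has_real_derivative_root_param[OF assms(1)] assms(2)])
      (simp add: abs_minus_commute)
  then have crit: "root_param_deriv_num a b d t = 0" using assms(1) by simp
  have "0 \<le> Pq a b (root_param a b d t) d s" if "\<bar>s - t\<bar> < e" for s
  proof -
    have "s > 0" using that assms(3) by linarith
    then show ?thesis using min that by (simp add: Pq_eq_root_param)
  qed
  then show ?thesis
    unfolding dbl_root_min_def using double_root_at_critical_point[OF assms(1) crit] assms(1,2)
    by auto
qed

lemma continuous_on_interior_max:
  fixes f :: "real \<Rightarrow> real"
  assumes "continuous_on {l..u} f" "l \<le> m" "m \<le> u" "f l < f m" "f u < f m"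
  obtains t where "l < t" "t < u" "\<forall>y\<in>{l..u}. f y \<le> f t"
proof -
  obtain t where t: "t \<in> {l..u}" "\<forall>y\<in>{l..u}. f y \<le> f t"
    using continuous_attains_sup[of "{l..u}" f] assms by auto
  then have "f m \<le> f t" using assms(2,3) by auto
  then show ?thesis using that t assms(4,5) by (fastforce simp: le_less)
qed

lemma continuous_on_interior_min:
  fixes f :: "real \<Rightarrow> real"
  assumes "continuous_on {l..u} f" "l \<le> m" "m \<le> u" "f m < f l" "f m < f u"
  obtains t where "l < t" "t < u" "\<forall>y\<in>{l..u}. f t \<le> f y"
proof -
  have "continuous_on {l..u} (\<lambda>x. - f x)" using assms(1) by (intro continuous_intros)
  then show ?thesis
    using continuous_on_interior_max[of l u "\<lambda>x. - f x" m] assms(2-5) that by auto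
qed

lemma root_param_local_max_below:
  assumes "d > 0" "0 < s" "root_param_deriv_num a b d s < 0"
  obtains t where "0 < t" "t < s" "root_param a b d s < root_param a b d t"
    "dbl_root_max a b (root_param a b d t) d t"
proof -
  let ?F = "root_param a b d"
  have "root_param_deriv_num a b d s / s^2 < 0" using assms(2,3) by (simp add: divide_neg_pos)
  then obtain h where h: "h > 0" "\<forall>k>0. k < h \<longrightarrow> ?F s < ?F (s - k)"
    using DERIV_neg_dec_left has_real_derivative_root_param[OF assms(2)] by blast
  define m where "m = s - min (h/2) (s/2)"
  have m: "0 < m" "m < s" "?F s < ?F m"
    using h assms(2) unfolding m_def by (auto simp: min_def)
  have "\<forall>\<^sub>F y in at_right 0. ?F y < ?F s"
    using root_param_at_right_0[OF assms(1)] by (simp add: filterlim_at_bot_dense)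
  then obtain r where r: "r > 0" "\<forall>y>0. y < r \<longrightarrow> ?F y < ?F s"
    by (auto simp: eventually_at_right_field)
  define l where "l = min (r/2) (m/2)"
  have l: "0 < l" "l < m" "?F l < ?F s" using r m unfolding l_def by (auto simp: min_def)
  obtain t where t: "l < t" "t < s" "\<forall>y\<in>{l..s}. ?F y \<le> ?F t"
    by (rule continuous_on_interior_max[OF continuous_on_root_param[OF l(1), of s], of m])
      (use l m in auto)
  have "dbl_root_max a b (?F t) d t"
    using t l(1) by (intro dbl_root_max_if_local_max[where e="min (t - l) (s - t)"])
      (auto simp: abs_less_iff)
  moreover have "?F s < ?F t" using t(3)[rule_format, of m] l m by auto
  moreover have "0 < t" using t l by linarith
  ultimately show ?thesis using that t(2) by blast
qed

lemma root_param_local_min_above: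
  assumes "0 < s" "root_param_deriv_num a b d s < 0"
  obtains t where "s < t" "root_param a b d t < root_param a b d s"
    "dbl_root_min a b (root_param a b d t) d t"
proof -
  let ?F = "root_param a b d"
  have "root_param_deriv_num a b d s / s^2 < 0" using assms by (simp add: divide_neg_pos)
  then obtain h where h: "h > 0" "\<forall>k>0. k < h \<longrightarrow> ?F (s + k) < ?F s"
    using DERIV_neg_dec_right has_real_derivative_root_param[OF assms(1)] by blast
  define m where "m = s + h/2"
  have m: "s < m" "?F m < ?F s" using h unfolding m_def by auto
  have "\<forall>\<^sub>F y in at_top. ?F s < ?F y"
    using root_param_at_top by (simp add: filterlim_at_top_dense)
  then obtain N where N: "\<forall>y\<ge>N. ?F s < ?F y" by (auto simp: eventually_at_top_linorder)
  define u where "u = max N (m + 1)"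
  have u: "m < u" "?F s < ?F u" using N unfolding u_def by auto
  obtain t where t: "s < t" "t < u" "\<forall>y\<in>{s..u}. ?F t \<le> ?F y"
    by (rule continuous_on_interior_min[OF continuous_on_root_param[OF assms(1), of u], of m])
      (use m u in auto)
  have "dbl_root_min a b (?F t) d t"
    using t assms(1) by (intro dbl_root_min_if_local_min[where e="min (t - s) (u - t)"])
      (auto simp: abs_less_iff)
  moreover have "?F t < ?F s" using t(3)[rule_format, of m] m u by auto
  ultimately show ?thesis using that t(1) by blast
qed

subsection \<open>Attainment of c_M\<close>

text \<open>The positive critical point of crit_param; c_b is the critical value there.\<close>

definition c_b_point :: "real \<Rightarrow> real \<Rightarrow> real" where
  "c_b_point a b = (3*a + sqrt (9*a^2 + 24*b)) / 12"

lemma c_b_point_gt: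
  assumes "a > 0" "b > 0"
  shows "a/2 < c_b_point a b"
proof -
  have "sqrt (9*a^2) < sqrt (9*a^2 + 24*b)" using assms(2) by simp
  moreover have "sqrt (9*a^2) = 3*a" using assms(1) by (simp add: real_sqrt_mult)
  ultimately show ?thesis unfolding c_b_point_def by simp
qed

lemma c_b_point_root:
  assumes "b \<ge> 0"
  shows "6 * (c_b_point a b)^2 = 3*a * c_b_point a b + b"
proof -
  have "(sqrt (9*a^2 + 24*b))^2 = 9*a^2 + 24*b" using assms by simp
  then show ?thesis unfolding c_b_point_def by (simp add: field_simps power2_eq_square)
qed

lemma Hc_negative_root_unique:
  assumes "a > 0" "b > 0" "x < 0" "y < 0" "Hc a b x = 0" "Hc a b y = 0"
  shows "x = y"
proof (rule ccontr)
  assume "x \<noteq> y"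
  define B where "B = 108*a*b + 27*a^3"
  have "Hc a b x - Hc a b y = (x - y) * (108*(x + y) + B)"
    unfolding Hc_def B_def by (simp add: algebra_simps power2_eq_square)
  then have "B = -108*(x + y)" using assms(5,6) \<open>x \<noteq> y\<close> by simp
  then have "Hc a b y = -108*x*y - 9*a^2*b^2 - 32*b^3"
    unfolding Hc_def B_def by algebra
  moreover have "x*y > 0" using assms(3,4) by (simp add: mult_neg_neg)
  moreover have "9*a^2*b^2 + 32*b^3 > 0" using assms(1,2) by (simp add: add_pos_pos)
  ultimately show False using assms(6) by linarith
qed

lemma c_b_eq_crit_param:
  assumes "a > 0" "b > 0"
  shows "c_b a b = crit_param a b (c_b_point a b)"
proof -
  define s where "s = c_b_point a b"
  note s = c_b_point_gt[OF assms, folded s_def]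
    c_b_point_root[OF less_imp_le[OF assms(2)], of a, folded s_def]
  have val: "crit_param a b s = -(s*(3*a^2 + 8*b) + a*b) / 6"
    unfolding crit_param_def using s(2) by algebra
  have "s*(3*a^2 + 8*b) > 0" using s(1) assms by (intro mult_pos_pos add_pos_pos) auto
  moreover have "a*b > 0" using assms by simp
  ultimately have neg: "crit_param a b s < 0" using val by simp
  have root: "Hc a b (crit_param a b s) = 0"
    unfolding Hc_def val using s(2) by algebra
  show ?thesis
    unfolding c_b_def s_def[symmetric]
    using neg root Hc_negative_root_unique[OF assms] by (intro the_equality) auto
qed

lemma crit_param_gt_c_b:
  assumes "a > 0" "b > 0" "t > 0" "t \<noteq> c_b_point a b"
  shows "c_b a b < crit_param a b t"
proof -
  define s where "s = c_b_point a b"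
  note s = c_b_point_gt[OF assms(1,2), folded s_def]
    c_b_point_root[OF less_imp_le[OF assms(2)], of a, folded s_def]
  have "crit_param a b t - crit_param a b s = (t - s)^2 * (4*t + 8*s - 3*a)"
    unfolding crit_param_def using s(2) by algebra
  moreover have "(t - s)^2 * (4*t + 8*s - 3*a) > 0"
    using s(1) assms unfolding s_def by (intro mult_pos_pos) auto
  ultimately show ?thesis using c_b_eq_crit_param[OF assms(1,2)] unfolding s_def by linarith
qed

lemma root_param_deriv_num_c_b_point_neg:
  assumes "a > 0" "b > 0" "c_b a b < (b^2 - 12*d) / (3*a)"
  shows "root_param_deriv_num a b d (c_b_point a b) < 0"
proof -
  define s where "s = c_b_point a b"
  have "12 * root_param_deriv_num a b d s = 3*a * crit_param a b s - (b^2 - 12*d)"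
    using c_b_point_root[OF less_imp_le[OF assms(2)], of a]
    unfolding root_param_deriv_num_def crit_param_def s_def by algebra
  moreover have "3*a * c_b a b < b^2 - 12*d"
    using assms by (simp add: pos_less_divide_eq mult.commute)
  ultimately show ?thesis using c_b_eq_crit_param[OF assms(1,2)] unfolding s_def by simp
qed

lemma LeastI_finite:
  fixes P :: "'a::linorder \<Rightarrow> bool"
  assumes "finite {x. P x}" "P x"
  shows "P (LEAST x. P x)" "(LEAST x. P x) \<le> x"
proof -
  have "{x. P x} \<noteq> {}" using assms(2) by blast
  then show "P (LEAST x. P x)" "(LEAST x. P x) \<le> x"
    using Least_Min[OF assms(1)] Min_in[OF assms(1)] Min_le[OF assms(1)] assms(2) by auto
qed

lemma c_M_attained:
  assumes "a > 0" "b > 0" "d > 0" "c_b a b < (b^2 - 12*d) / (3*a)"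
  obtains t where "dbl_root_max a b (c_M a b d) d t"
proof -
  let ?F = "root_param a b d"
  define s where "s = c_b_point a b"
  have s: "0 < s" "root_param_deriv_num a b d s < 0"
    using c_b_point_gt[OF assms(1,2)] root_param_deriv_num_c_b_point_neg[OF assms(1,2,4)]
      assms(1) unfolding s_def by (auto simp: field_simps)
  obtain t1 where t1: "?F s < ?F t1" "dbl_root_max a b (?F t1) d t1"
    using root_param_local_max_below[OF assms(3) s] by blast
  obtain t2 where t2: "s < t2" "?F t2 < ?F s" "dbl_root_min a b (?F t2) d t2"
    using root_param_local_min_above[OF s] by blast
  have fin_min: "finite {c. c > c_b a b \<and> (\<exists>t. dbl_root_min a b c d t)}"
    by (rule finite_subset[OF _ finite_double_root_params]) (auto simp: dbl_root_min_def)
  have fin_max: "finite {c. c > c_m a b d \<and> (\<exists>t. dbl_root_max a b c d t)}"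
    by (rule finite_subset[OF _ finite_double_root_params]) (auto simp: dbl_root_max_def)
  have "?F t2 = crit_param a b t2"
    using t2(3) double_root_param(1) unfolding dbl_root_min_def by blast
  then have "c_b a b < ?F t2"
    using crit_param_gt_c_b[OF assms(1,2)] t2(1) s(1) unfolding s_def by auto
  then have "c_m a b d \<le> ?F t2"
    unfolding c_m_def using LeastI_finite(2)[OF fin_min] t2(3) by blast
  then have "c_m a b d < ?F t1" using t1(1) t2(2) by linarith
  then have "\<exists>t. dbl_root_max a b (c_M a b d) d t"
    unfolding c_M_def using LeastI_finite(1)[OF fin_max] t1(2) by blast
  then show ?thesis using that by blast
qed

lemma two_cycle_unique_equilibrium:
  assumes "two_cycle a b c d p q" "p < q" "a > 0" "d > 0" "equilibria a b c d = {t}"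
  shows "p < t \<and> t < q"
proof -
  obtain s where "p < s" "s < q" "s \<in> equilibria a b c d"
    by (rule two_cycle_equilibrium_between[OF assms(1,2)])
  then show ?thesis using two_cycle_less_equilibrium[OF assms(1-4)] assms(5) by auto
qed

lemma two_cycle_two_equilibria:
  assumes "two_cycle a b c d p q" "p < q" "a > 0" "d > 0"
    and "equilibria a b c d = {t1, t2}" "t1 < t2"
  shows "p < t1" "t1 < q" "q \<noteq> t2"
proof -
  show "p < t1" using two_cycle_less_equilibrium[OF assms(1-4)] assms(5) by auto
  obtain s where "s < q" "s \<in> equilibria a b c d"
    by (rule two_cycle_equilibrium_between[OF assms(1,2)])
  then show "t1 < q" using assms(5,6) by auto
  have "Pq a b c d t2 = 0" using assms(5) mem_equilibria_iff[of t2] by blast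
  then show "q \<noteq> t2" using two_cycle_Pq_signs(2)[OF assms(1,2)] by auto
qed

lemma two_cycle_two_equilibria_local_max:
  assumes "two_cycle a b c d p q" "p < q" "a > 0" "d > 0"
    and E: "equilibria a b c d = {t1, t2}" "t1 < t2" and "dbl_root_max a b c d t"
  shows "t2 < q"
proof (rule ccontr)
  assume "\<not> t2 < q"
  then have between: "t1 < q" "q < t2" using two_cycle_two_equilibria[OF assms(1-4) E] by auto
  obtain e where t: "t > 0" "Pq a b c d t = 0" "e > 0"
    "\<forall>s. \<bar>s - t\<bar> < e \<longrightarrow> Pq a b c d s \<le> Pq a b c d t"
    using assms(7) unfolding dbl_root_max_def by blast
  then have "t \<in> {t1, t2}" using E(1) by (auto simp: mem_equilibria_iff)
  then have "q \<noteq> t" using between by auto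
  then obtain w where w: "Pq a b c d w = 0" "t < w \<and> w < q \<or> q < w \<and> w < t"
    using local_max_zero_crossing[OF isCont_Pq t(2-4) two_cycle_Pq_signs(2)[OF assms(1,2)]] by blast
  moreover have "0 < w" using w(2) t(1) assms(1) unfolding two_cycle_def by linarith
  then have "w \<in> {t1, t2}" using E(1) w(1) mem_equilibria_iff by blast
  ultimately show False using between \<open>t \<in> {t1, t2}\<close> by auto
qed

lemma two_cycle_three_equilibria:
  assumes "two_cycle a b c d p q" "p < q" "a > 0" "d > 0"
    and E: "equilibria a b c d = {t1, t2, t3}" "t1 < t2" "t2 < t3"
  shows "(p < t1 \<and> t1 < q \<and> q < t2) \<or> (p < t1 \<and> q > t3)"
proof -
  have "p < t1" using two_cycle_less_equilibrium[OF assms(1-4)] E(1) by auto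
  moreover obtain s where "s < q" "s \<in> equilibria a b c d"
    by (rule two_cycle_equilibrium_between[OF assms(1,2)])
  then have "t1 < q" using E by auto
  moreover have roots: "0 < t1" "Pq a b c d t1 = 0" "Pq a b c d t2 = 0" "Pq a b c d t3 = 0"
    using E(1) by (auto simp: mem_equilibria_iff)
  have "Pq a b c d q > 0" using two_cycle_Pq_signs[OF assms(1,2)] by simp
  then have "\<not> (t2 < q \<and> q < t3)"
    using Pq_neg_between_largest_roots[OF roots(2-4,1) E(2,3) assms(4)] by force
  moreover have "q \<noteq> t2" "q \<noteq> t3"
    using \<open>Pq a b c d q > 0\<close> roots by auto
  ultimately show ?thesis by linarith
qed

theorem lemma4:
  fixes a b c d p q :: real
  assumes "a > 0" and "b > 0" and "d > 0"
    and "c > c_minus a b d"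
    and "two_cycle a b c d p q" and "p < q"
  shows
    "(\<forall>t. equilibria a b c d = {t} \<longrightarrow> p < t \<and> t < q)
   \<and> (\<forall>t1 t2. c_b a b < (b^2 - 12*d) / (3*a) \<and> equilibria a b c d = {t1, t2} \<and> t1 < t2 \<longrightarrow>
        (c = c_m a b d \<longrightarrow> (p < t1 \<and> t1 < q \<and> q < t2) \<or> (p < t1 \<and> q > t2))
      \<and> (c = c_M a b d \<longrightarrow> p < t1 \<and> q > t2))
   \<and> (\<forall>t1 t2 t3. equilibria a b c d = {t1, t2, t3} \<and> t1 < t2 \<and> t2 < t3 \<longrightarrow>
        (p < t1 \<and> t1 < q \<and> q < t2) \<or> (p < t1 \<and> q > t3))"
proof -
  note cycle = assms(5,6,1,3)
  have two: "(c = c_m a b d \<longrightarrow> (p < t1 \<and> t1 < q \<and> q < t2) \<or> (p < t1 \<and> q > t2))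
      \<and> (c = c_M a b d \<longrightarrow> p < t1 \<and> q > t2)"
    if h: "c_b a b < (b^2 - 12*d) / (3*a)" "equilibria a b c d = {t1, t2}" "t1 < t2" for t1 t2
  proof -
    note facts = two_cycle_two_equilibria[OF cycle h(2,3)]
    have "t2 < q" if "c = c_M a b d"
    proof -
      obtain t where "dbl_root_max a b (c_M a b d) d t"
        by (rule c_M_attained[OF assms(1-3) h(1)])
      then show ?thesis
        unfolding that[symmetric] by (rule two_cycle_two_equilibria_local_max[OF cycle h(2,3)])
    qed
    then show ?thesis using facts by auto
  qed
  show ?thesis
    using two_cycle_unique_equilibrium[OF cycle] two two_cycle_three_equilibria[OF cycle] by blast
qed

end
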